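(* Let $*\in\{\pm,\curlyvee,\Join,1\}$. For every $\phi\in\mathcal{L}$ and every state $\mathfrak{s}$ of the canonical model $\mathfrak{M}^{C}_*$: (1) $\mathfrak{M}^{C}_*,\mathfrak{s}\Vdash^+\phi$ iff $\phi\in\mathbf{h}(\mathfrak{s})$; (2) $\mathfrak{M}^{C}_*,\mathfrak{s}\Vdash^-\phi$ iff ${\sim}\phi\in\mathbf{h}(\mathfrak{s})$.
   Context: Fix a countable set $\mathsf{Prop}$ of propositional variables. The language $\mathcal{L}$ is given by the grammar $\phi::=p\mid{\sim}\phi\mid(\phi\wedge\phi)\mid(\phi\vee\phi)\mid(\phi\to\phi)\mid\Box\phi\mid\Diamond\phi$ with $p\in\mathsf{Prop}$. $\phi\leftrightarrow\chi$ abbreviates $(\phi\to\chi)\wedge(\chi\to\phi)$. Semantics. A structure $\langle W,\le,R^+_\Box,R^-_\Box,R^+_\Diamond,R^-_\Diamond,v^+,v^-\rangle$ with $W\ne\varnothing$, $\le$ a preorder, four arbitrary binary relations, and $v^+,v^-:\mathsf{Prop}\to2^W$ upward closed under $\le$ is a $\mathsf{CN4K}$ model; $R(w)=\{w'\mid wRw'\}$. Support: $w\Vdash^\pm p$ iff $w\in v^\pm(p)$; $w\Vdash^+{\sim}\phi$ iff $w\Vdash^-\phi$; $w\Vdash^-{\sim}\phi$ iff $w\Vdash^+\phi$; $w\Vdash^+\phi\wedge\chi$ iff both; $w\Vdash^-\phi\wedge\chi$ iff $w\Vdash^-\phi$ or $w\Vdash^-\chi$; $w\Vdash^+\phi\vee\chi$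 iff $w\Vdash^+\phi$ or $w\Vdash^+\chi$; $w\Vdash^-\phi\vee\chi$ iff both negatively supported; $w\Vdash^+\phi\to\chi$ iff for all $w'\ge w$, $w'\Vdash^+\phi$ implies $w'\Vdash^+\chi$; $w\Vdash^-\phi\to\chi$ iff $w\Vdash^+\phi$ and $w\Vdash^-\chi$; $w\Vdash^+\Box\phi$ iff $\forall w'\ge w\ \forall w''\in R^+_\Box(w')$: $w''\Vdash^+\phi$; $w\Vdash^-\Box\phi$ iff $\forall w'\ge w\ \exists w''\in R^-_\Box(w')$: $w''\Vdash^-\phi$; $w\Vdash^+\Diamond\phi$ iff $\forall w'\ge w\ \exists w''\in R^+_\Diamond(w')$: $w''\Vdash^+\phi$; $w\Vdash^-\Diamond\phi$ iff $\forall w'\ge w\ \forall w''\in R^-_\Diamond(w')$: $w''\Vdash^-\phi$. Calculi. $\mathcal{H}\mathsf{N4}$ has as axioms all $\mathcal{L}$-instances of: $\phi\to(\chi\to\phi)$; $(\phi\to(\chi\to\psi))\to((\phi\to\chi)\to(\phi\to\psi))$; $\phi\wedge\chi\to\phi$; $\phi\wedge\chi\to\chi$; $\phi\to(\chi\to\phi\wedge\chi)$; $\phi\to\phi\vee\chi$; $\chi\to\phi\vee\chi$; $(\phi\to\psi)\to((\chi\to\psi)\to(\phi\vee\chi\to\psi))$; ${\sim}{\sim}\phi\leftrightarrow\phi$; ${\sim}(\phi\wedge\chi)\leftrightarrow({\sim}\phi\vee{\sim}\chi)$; ${\sim}(\phi\vee\chi)\leftrightarrow({\sim}\phi\wedge{\sim}\chi)$;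 ${\sim}(\phi\to\chi)\leftrightarrow(\phi\wedge{\sim}\chi)$; and modus ponens. $\mathcal{H}\mathsf{CN4K}$ adds the axiom schemes $\Box(\phi\to\phi)$; ${\sim}\Diamond{\sim}(\phi\to\phi)$; $(\Box\phi\wedge\Box\chi)\to\Box(\phi\wedge\chi)$; $({\sim}\Diamond\phi\wedge{\sim}\Diamond\chi)\to{\sim}\Diamond(\phi\vee\chi)$, and the rules: from $\vdash\phi\to\chi$ infer $\vdash\Box\phi\to\Box\chi$; from $\vdash\phi\to\chi$ infer $\vdash\Diamond\phi\to\Diamond\chi$; from $\vdash{\sim}\phi\to{\sim}\chi$ infer $\vdash{\sim}\Box\phi\to{\sim}\Box\chi$; from $\vdash{\sim}\phi\to{\sim}\chi$ infer $\vdash{\sim}\Diamond\phi\to{\sim}\Diamond\chi$. Additional schemes: $\pm_\Box$: $\Box(\phi\to\chi)\to(\Diamond\phi\to\Diamond\chi)$; $\pm_\Diamond$: ${\sim}\Diamond{\sim}({\sim}\phi\to{\sim}\chi)\to({\sim}\Box\phi\to{\sim}\Box\chi)$; $\curlyvee_\Box$: $\Box(\phi\to\chi)\to({\sim}\Box{\sim}\phi\to{\sim}\Box{\sim}\chi)$; $\curlyvee_\Diamond$: ${\sim}\Diamond{\sim}(\phi\to\chi)\to(\Diamond\phi\to\Diamond\chi)$; $\Join_\Box$: $\Box\phi\leftrightarrow{\sim}\Diamond{\sim}\phi$; $\Join_\Diamond$: $\Diamond\phi\leftrightarrow{\sim}\Box{\sim}\phi$. $\mathcal{H}\mathsf{CN4K}^\pm$,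 $\mathcal{H}\mathsf{CN4K}^\curlyvee$, $\mathcal{H}\mathsf{CN4K}^{\Join}$ are $\mathcal{H}\mathsf{CN4K}$ plus $\{\pm_\Box,\pm_\Diamond\}$, $\{\curlyvee_\Box,\curlyvee_\Diamond\}$, $\{\Join_\Box,\Join_\Diamond\}$ respectively; $\mathcal{H}\mathsf{CN4K}^1$ is $\mathcal{H}\mathsf{CN4K}$ plus all six. $\Gamma\vdash_{\mathcal{H}\mathsf{L}}\phi$ means there is a finite sequence ending in $\phi$ of axiom instances, members of $\Gamma$, and rule consequences of earlier members, the modal rules being applied only to theorems. Canonical models. For fixed $*$, a set $\Xi\subseteq\mathcal{L}$ is saturated if it is deductively closed under $\vdash_{\mathcal{H}\mathsf{CN4K}^*}$ and prime ($\xi\vee\xi'\in\Xi$ implies $\xi\in\Xi$ or $\xi'\in\Xi$). A segment is a tuple $\mathfrak{s}=\langle\Xi,\Phi^+_\Box,\Phi^-_\Box,\Phi^+_\Diamond,\Phi^-_\Diamond\rangle$ where $\Xi$ is saturated (the head, $\mathbf{h}(\mathfrak{s})=\Xi$) and each $\Phi^\bullet_\heartsuit$ is a set (possibly empty) of saturated sets such that: if $\Box\phi\in\Xi$ then $\phi\in\Delta$ for every $\Delta\in\Phi^+_\Box$; if ${\sim}\Box\phi\in\Xi$ then ${\sim}\phi\in\Delta$ for some $\Delta\in\Phi^-_\Box$; if $\Diamond\phi\in\Xi$ then $\phi\in\Delta$ for some $\Delta\in\Phi^+_\Diamond$; if ${\sim}\Diamond\phi\in\Xi$ then ${\sim}\phi\in\Delta$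 for every $\Delta\in\Phi^-_\Diamond$. A segment is a $\pm$-segment if $\Phi^+_\Box=\Phi^+_\Diamond$ and $\Phi^-_\Box=\Phi^-_\Diamond$; a $\curlyvee$-segment if $\Phi^+_\Box=\Phi^-_\Box$ and $\Phi^+_\Diamond=\Phi^-_\Diamond$; a $\Join$-segment if $\Phi^+_\Box=\Phi^-_\Diamond$ and $\Phi^+_\Diamond=\Phi^-_\Box$; a $1$-segment if all four families coincide. $\mathfrak{M}^{C}_*$ has as states all $*$-segments, $\mathfrak{s}\le^{C}\mathfrak{s}'$ iff $\mathbf{h}(\mathfrak{s})\subseteq\mathbf{h}(\mathfrak{s}')$, $\mathfrak{s}\,{R^\bullet_\heartsuit}^{C}\,\mathfrak{s}'$ iff $\mathbf{h}(\mathfrak{s}')\in\Phi^\bullet_\heartsuit$ (the corresponding component of $\mathfrak{s}$), $\mathfrak{s}\in{v^+}^{C}(p)$ iff $p\in\mathbf{h}(\mathfrak{s})$, $\mathfrak{s}\in{v^-}^{C}(p)$ iff ${\sim}p\in\mathbf{h}(\mathfrak{s})$. *)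

theory Defs
  imports Main "HOL-Library.Countable"
begin

datatype 'p fm =
    Var 'p
  | Neg "'p fm"             (* strong negation ~ *)
  | Conj "'p fm" "'p fm"
  | Disj "'p fm" "'p fm"
  | Imp "'p fm" "'p fm"
  | Box "'p fm"
  | Dia "'p fm"

definition Iff :: "'p fm \<Rightarrow> 'p fm \<Rightarrow> 'p fm" where
  "Iff a b = Conj (Imp a b) (Imp b a)"

datatype variant = VPm | VVee | VJoin | VOne

inductive_set n4_ax :: "'p fm set" where
  "Imp a (Imp b a) \<in> n4_ax"
| "Imp (Imp a (Imp b c)) (Imp (Imp a b) (Imp a c)) \<in> n4_ax"
| "Imp (Conj a b) a \<in> n4_ax"
| "Imp (Conj a b) b \<in> n4_ax"
| "Imp a (Imp b (Conj a b)) \<in> n4_ax"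
| "Imp a (Disj a b) \<in> n4_ax"
| "Imp b (Disj a b) \<in> n4_ax"
| "Imp (Imp a c) (Imp (Imp b c) (Imp (Disj a b) c)) \<in> n4_ax"
| "Iff (Neg (Neg a)) a \<in> n4_ax"
| "Iff (Neg (Conj a b)) (Disj (Neg a) (Neg b)) \<in> n4_ax"
| "Iff (Neg (Disj a b)) (Conj (Neg a) (Neg b)) \<in> n4_ax"
| "Iff (Neg (Imp a b)) (Conj a (Neg b)) \<in> n4_ax"

inductive_set cn4k_ax :: "'p fm set" where
  "Box (Imp a a) \<in> cn4k_ax"
| "Neg (Dia (Neg (Imp a a))) \<in> cn4k_ax"
| "Imp (Conj (Box a) (Box b)) (Box (Conj a b)) \<in> cn4k_ax"
| "Imp (Conj (Neg (Dia a)) (Neg (Dia b))) (Neg (Dia (Disj a b))) \<in> cn4k_ax"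

inductive_set pm_ax :: "'p fm set" where
  pm_box: "Imp (Box (Imp a b)) (Imp (Dia a) (Dia b)) \<in> pm_ax"
| pm_dia: "Imp (Neg (Dia (Neg (Imp (Neg a) (Neg b))))) (Imp (Neg (Box a)) (Neg (Box b))) \<in> pm_ax"

inductive_set vee_ax :: "'p fm set" where
  vee_box: "Imp (Box (Imp a b)) (Imp (Neg (Box (Neg a))) (Neg (Box (Neg b)))) \<in> vee_ax"
| vee_dia: "Imp (Neg (Dia (Neg (Imp a b)))) (Imp (Dia a) (Dia b)) \<in> vee_ax"

inductive_set join_ax :: "'p fm set" where
  join_box: "Iff (Box a) (Neg (Dia (Neg a))) \<in> join_ax"
| join_dia: "Iff (Dia a) (Neg (Box (Neg a))) \<in> join_ax"

fun extra_ax :: "variant \<Rightarrow> 'p fm set" where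
  "extra_ax VPm = pm_ax"
| "extra_ax VVee = vee_ax"
| "extra_ax VJoin = join_ax"
| "extra_ax VOne = pm_ax \<union> vee_ax \<union> join_ax"

definition axioms :: "variant \<Rightarrow> 'p fm set" where
  "axioms L = n4_ax \<union> cn4k_ax \<union> extra_ax L"

inductive thmL :: "variant \<Rightarrow> 'p fm \<Rightarrow> bool" for L where
  ax: "a \<in> axioms L \<Longrightarrow> thmL L a"
| mp: "thmL L (Imp a b) \<Longrightarrow> thmL L a \<Longrightarrow> thmL L b"
| rbox: "thmL L (Imp a b) \<Longrightarrow> thmL L (Imp (Box a) (Box b))"
| rdia: "thmL L (Imp a b) \<Longrightarrow> thmL L (Imp (Dia a) (Dia b))"
| rnbox: "thmL L (Imp (Neg a) (Neg b)) \<Longrightarrow> thmL L (Imp (Neg (Box a)) (Neg (Box b)))"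
| rndia: "thmL L (Imp (Neg a) (Neg b)) \<Longrightarrow> thmL L (Imp (Neg (Dia a)) (Neg (Dia b)))"

text \<open>Derivability from premises: modal rules only applied to theorems.\<close>
inductive derives :: "variant \<Rightarrow> 'p fm set \<Rightarrow> 'p fm \<Rightarrow> bool" for L G where
  theorem_rule: "thmL L a \<Longrightarrow> derives L G a"
| hyp: "a \<in> G \<Longrightarrow> derives L G a"
| mp: "derives L G (Imp a b) \<Longrightarrow> derives L G a \<Longrightarrow> derives L G b"

definition saturated :: "variant \<Rightarrow> 'p fm set \<Rightarrow> bool" where
  "saturated L X \<longleftrightarrow> (\<forall>a. derives L X a \<longrightarrow> a \<in> X)
      \<and> (\<forall>a b. Disj a b \<in> X \<longrightarrow> a \<in> X \<or> b \<in> X)"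

record 'p seg =
  head :: "'p fm set"
  PhiBp :: "'p fm set set"
  PhiBm :: "'p fm set set"
  PhiDp :: "'p fm set set"
  PhiDm :: "'p fm set set"

definition segment :: "variant \<Rightarrow> 'p seg \<Rightarrow> bool" where
  "segment L s \<longleftrightarrow> saturated L (head s)
     \<and> (\<forall>D \<in> PhiBp s. saturated L D) \<and> (\<forall>D \<in> PhiBm s. saturated L D)
     \<and> (\<forall>D \<in> PhiDp s. saturated L D) \<and> (\<forall>D \<in> PhiDm s. saturated L D)
     \<and> (\<forall>a. Box a \<in> head s \<longrightarrow> (\<forall>D \<in> PhiBp s. a \<in> D))
     \<and> (\<forall>a. Neg (Box a) \<in> head s \<longrightarrow> (\<exists>D \<in> PhiBm s. Neg a \<in> D))
     \<and> (\<forall>a. Dia a \<in> head s \<longrightarrow> (\<exists>D \<in> PhiDp s. a \<in> D))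
     \<and> (\<forall>a. Neg (Dia a) \<in> head s \<longrightarrow> (\<forall>D \<in> PhiDm s. Neg a \<in> D))"

fun shape :: "variant \<Rightarrow> 'p seg \<Rightarrow> bool" where
  "shape VPm s \<longleftrightarrow> PhiBp s = PhiDp s \<and> PhiBm s = PhiDm s"
| "shape VVee s \<longleftrightarrow> PhiBp s = PhiBm s \<and> PhiDp s = PhiDm s"
| "shape VJoin s \<longleftrightarrow> PhiBp s = PhiDm s \<and> PhiDp s = PhiBm s"
| "shape VOne s \<longleftrightarrow> PhiBp s = PhiBm s \<and> PhiBp s = PhiDp s \<and> PhiBp s = PhiDm s"

definition star_segment :: "variant \<Rightarrow> 'p seg \<Rightarrow> bool" where
  "star_segment L s \<longleftrightarrow> segment L s \<and> shape L s"

record ('w, 'p) cmodel =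
  W :: "'w set"
  le :: "'w \<Rightarrow> 'w \<Rightarrow> bool"
  RBp :: "'w \<Rightarrow> 'w \<Rightarrow> bool"
  RBm :: "'w \<Rightarrow> 'w \<Rightarrow> bool"
  RDp :: "'w \<Rightarrow> 'w \<Rightarrow> bool"
  RDm :: "'w \<Rightarrow> 'w \<Rightarrow> bool"
  vp :: "'p \<Rightarrow> 'w set"
  vm :: "'p \<Rightarrow> 'w set"

text \<open>forces M True w a: w supports a positively; forces M False w a: negatively.\<close>
fun forces :: "('w, 'p) cmodel \<Rightarrow> bool \<Rightarrow> 'w \<Rightarrow> 'p fm \<Rightarrow> bool" where
  "forces M True w (Var p) = (w \<in> vp M p)"
| "forces M False w (Var p) = (w \<in> vm M p)"
| "forces M b w (Neg a) = forces M (\<not> b) w a"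
| "forces M True w (Conj a c) = (forces M True w a \<and> forces M True w c)"
| "forces M False w (Conj a c) = (forces M False w a \<or> forces M False w c)"
| "forces M True w (Disj a c) = (forces M True w a \<or> forces M True w c)"
| "forces M False w (Disj a c) = (forces M False w a \<and> forces M False w c)"
| "forces M True w (Imp a c) =
     (\<forall>w' \<in> W M. le M w w' \<longrightarrow> forces M True w' a \<longrightarrow> forces M True w' c)"
| "forces M False w (Imp a c) = (forces M True w a \<and> forces M False w c)"
| "forces M True w (Box a) =
     (\<forall>w' \<in> W M. le M w w' \<longrightarrow> (\<forall>w'' \<in> W M. RBp M w' w'' \<longrightarrow> forces M True w'' a))"
| "forces M False w (Box a) =
     (\<forall>w' \<in> W M. le M w w' \<longrightarrow> (\<exists>w'' \<in> W M. RBm M w' w'' \<and> forces M False w'' a))"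
| "forces M True w (Dia a) =
     (\<forall>w' \<in> W M. le M w w' \<longrightarrow> (\<exists>w'' \<in> W M. RDp M w' w'' \<and> forces M True w'' a))"
| "forces M False w (Dia a) =
     (\<forall>w' \<in> W M. le M w w' \<longrightarrow> (\<forall>w'' \<in> W M. RDm M w' w'' \<longrightarrow> forces M False w'' a))"

definition canon :: "variant \<Rightarrow> ('p seg, 'p) cmodel" where
  "canon L = \<lparr> W = {s. star_segment L s},
     le = (\<lambda>s s'. head s \<subseteq> head s'),
     RBp = (\<lambda>s s'. head s' \<in> PhiBp s),
     RBm = (\<lambda>s s'. head s' \<in> PhiBm s),
     RDp = (\<lambda>s s'. head s' \<in> PhiDp s),
     RDm = (\<lambda>s s'. head s' \<in> PhiDm s),
     vp = (\<lambda>p. {s. star_segment L s \<and> Var p \<in> head s}),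
     vm = (\<lambda>p. {s. star_segment L s \<and> Neg (Var p) \<in> head s}) \<rparr>"

end

theory Submission
  imports Defs
begin

text \<open>
  Saturated sets respect the N4
  connectives, and Lindenbaum's lemma (if G does not derive phi, some saturated extension
  of G omits phi) yields the clause for implication. In each modal clause one direction is
  a segment condition. For the other, a head X that misses the relevant formula is given
  new families, made of Lindenbaum extensions of box_set X or neg_dia_set X, that refute
  the clause. Consistency of these extensions is where the calculus enters: both sets are
  directed, so any derivation from them uses a single member, and the monotonicity rules
  together with the interaction axioms of the variant carry it back into X. The shape of a
  *-segment decides which families must coincide, hence which interaction axiom is used.
\<close>

section \<open>Derivations\<close>

lemma thmL_n4_ax: "a \<in> n4_ax \<Longrightarrow> thmL L a"
  by (rule thmL.ax) (simp add: axioms_def)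

lemma thmL_cn4k_ax: "a \<in> cn4k_ax \<Longrightarrow> thmL L a"
  by (rule thmL.ax) (simp add: axioms_def)

lemma thmL_pm_ax: "L \<in> {VPm, VOne} \<Longrightarrow> a \<in> pm_ax \<Longrightarrow> thmL L a"
  by (rule thmL.ax) (auto simp: axioms_def)

lemma thmL_vee_ax: "L \<in> {VVee, VOne} \<Longrightarrow> a \<in> vee_ax \<Longrightarrow> thmL L a"
  by (rule thmL.ax) (auto simp: axioms_def)

lemma thmL_join_ax: "L \<in> {VJoin, VOne} \<Longrightarrow> a \<in> join_ax \<Longrightarrow> thmL L a"
  by (rule thmL.ax) (auto simp: axioms_def)

lemma derives_n4_ax: "a \<in> n4_ax \<Longrightarrow> derives L G a"
  by (intro derives.theorem_rule thmL_n4_ax)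

lemma derives_K: "derives L G (Imp a (Imp b a))"
  by (rule derives_n4_ax) (rule n4_ax.intros)

lemma derives_S: "derives L G (Imp (Imp a (Imp b c)) (Imp (Imp a b) (Imp a c)))"
  by (rule derives_n4_ax) (rule n4_ax.intros)

lemma derives_imp_refl: "derives L G (Imp a a)"
  by (meson derives.mp derives_K derives_S)

lemma derives_deduction: "derives L (insert a G) b \<Longrightarrow> derives L G (Imp a b)"
proof (induction rule: derives.induct)
  case (theorem_rule b)
  then show ?case using derives_K derives.mp derives.theorem_rule by blast
next
  case (hyp b)
  then show ?case using derives_K derives.mp derives.hyp derives_imp_refl by blast
next
  case (mp b c)
  then show ?case using derives_S derives.mp by blast
qed

lemma derives_mono: "derives L G a \<Longrightarrow> G \<subseteq> G' \<Longrightarrow> derives L G' a"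
  by (induction rule: derives.induct) (auto intro: derives.intros)

lemma derives_cut: "derives L (insert a G) b \<Longrightarrow> derives L G a \<Longrightarrow> derives L G b"
  using derives_deduction derives.mp by blast

lemma thmL_imp_if_derives: "derives L {a} b \<Longrightarrow> thmL L (Imp a b)"
proof -
  have "derives L {} c \<Longrightarrow> thmL L c" for c
    by (induction rule: derives.induct) (auto intro: thmL.mp)
  then show "derives L {a} b \<Longrightarrow> thmL L (Imp a b)"
    using derives_deduction by blast
qed

lemma derives_finite_hyps: "derives L G a \<Longrightarrow> \<exists>F. finite F \<and> F \<subseteq> G \<and> derives L F a"
proof (induction rule: derives.induct)
  case (theorem_rule a)
  then show ?case by (auto intro: derives.intros)
next
  case (hyp a)
  then show ?case by (intro exI[of _ "{a}"]) (auto intro: derives.intros)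
next
  case (mp a b)
  then obtain F1 F2 where "finite F1" "F1 \<subseteq> G" "derives L F1 (Imp a b)"
      "finite F2" "F2 \<subseteq> G" "derives L F2 a" by blast
  then show ?case
    by (intro exI[of _ "F1 \<union> F2"]) (auto intro: derives.mp derives_mono)
qed

lemma derives_conjI: "derives L G a \<Longrightarrow> derives L G b \<Longrightarrow> derives L G (Conj a b)"
  using derives_n4_ax[OF n4_ax.intros(5)] derives.mp by blast

lemma derives_conjD1: "derives L G (Conj a b) \<Longrightarrow> derives L G a"
  using derives_n4_ax[OF n4_ax.intros(3)] derives.mp by blast

lemma derives_conjD2: "derives L G (Conj a b) \<Longrightarrow> derives L G b"
  using derives_n4_ax[OF n4_ax.intros(4)] derives.mp by blast

lemma derives_disjI1: "derives L G a \<Longrightarrow> derives L G (Disj a b)"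
  using derives_n4_ax[OF n4_ax.intros(6)] derives.mp by blast

lemma derives_disjI2: "derives L G b \<Longrightarrow> derives L G (Disj a b)"
  using derives_n4_ax[OF n4_ax.intros(7)] derives.mp by blast

lemma derives_disjE:
  "derives L G (Disj a b) \<Longrightarrow> derives L G (Imp a c) \<Longrightarrow> derives L G (Imp b c) \<Longrightarrow> derives L G c"
  using derives_n4_ax[OF n4_ax.intros(8)] derives.mp by blast

lemma derives_iff_if_thmL: "thmL L (Iff a b) \<Longrightarrow> derives L G a \<longleftrightarrow> derives L G b"
  unfolding Iff_def by (meson derives.mp derives.theorem_rule derives_conjD1 derives_conjD2)

lemma derives_Neg_Neg_iff: "derives L G (Neg (Neg a)) \<longleftrightarrow> derives L G a"
  by (intro derives_iff_if_thmL thmL_n4_ax n4_ax.intros)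

lemma derives_Neg_Disj_iff: "derives L G (Neg (Disj a b)) \<longleftrightarrow> derives L G (Conj (Neg a) (Neg b))"
  by (intro derives_iff_if_thmL thmL_n4_ax n4_ax.intros)

lemma thmL_Neg_imp_Neg_Neg_Neg: "thmL L (Imp (Neg a) (Neg (Neg (Neg a))))"
  by (rule thmL_imp_if_derives) (simp add: derives_Neg_Neg_iff derives.hyp)

lemma thmL_Neg_Neg_Neg_imp_Neg: "thmL L (Imp (Neg (Neg (Neg a))) (Neg a))"
  by (rule thmL_imp_if_derives) (metis derives_Neg_Neg_iff derives.hyp singletonI)

section \<open>Saturated sets\<close>

lemma lindenbaum:
  assumes "\<not> derives L G \<phi>"
  obtains X where "G \<subseteq> X" "saturated L X" "\<phi> \<notin> X"
proof -
  let ?A = "{Y. G \<subseteq> Y \<and> \<not> derives L Y \<phi>}"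
  have "\<exists>M\<in>?A. \<forall>Y\<in>?A. M \<subseteq> Y \<longrightarrow> Y = M"
  proof (rule subset_Zorn)
    fix C assume chain: "subset.chain ?A C"
    show "\<exists>U\<in>?A. \<forall>Y\<in>C. Y \<subseteq> U"
    proof (cases "C = {}")
      case True
      then show ?thesis using assms by (intro bexI[of _ G]) auto
    next
      case False
      have "\<not> derives L (\<Union>C) \<phi>"
      proof
        assume "derives L (\<Union>C) \<phi>"
        from derives_finite_hyps[OF this] obtain F
          where F: "finite F" "F \<subseteq> \<Union>C" "derives L F \<phi>" by blast
        obtain Y where Y: "Y \<in> C" "F \<subseteq> Y"
          by (rule finite_subset_Union_chain[OF F(1,2) False chain])
        have "derives L Y \<phi>" by (rule derives_mono[OF F(3) Y(2)])
        moreover have "Y \<in> ?A" using chain Y(1) unfolding subset.chain_def by blast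
        ultimately show False by simp
      qed
      moreover have "G \<subseteq> \<Union>C" using False chain unfolding subset.chain_def by blast
      ultimately show ?thesis by (intro bexI[of _ "\<Union>C"] ballI Union_upper) simp_all
    qed
  qed
  then obtain M where M: "G \<subseteq> M" "\<not> derives L M \<phi>"
    and maximal: "\<And>Y. G \<subseteq> Y \<Longrightarrow> \<not> derives L Y \<phi> \<Longrightarrow> M \<subseteq> Y \<Longrightarrow> Y = M"
    by (elim bexE) auto
  have extend: "derives L M (Imp a \<phi>)" if "a \<notin> M" for a
  proof (rule derives_deduction, rule ccontr)
    assume "\<not> derives L (insert a M) \<phi>"
    then have "insert a M = M" using M(1) by (intro maximal) auto
    with that show False by blast
  qed
  have "a \<in> M" if "derives L M a" for a
    using extend M(2) that derives.mp by blast
  moreover have "a \<in> M \<or> b \<in> M" if "Disj a b \<in> M" for a b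
    using extend M(2) derives_disjE derives.hyp[OF that] by blast
  ultimately have "saturated L M" unfolding saturated_def by blast
  moreover have "\<phi> \<notin> M" using M(2) derives.hyp by blast
  ultimately show thesis using that M(1) by blast
qed

lemma saturated_derives: "saturated L X \<Longrightarrow> derives L X a \<Longrightarrow> a \<in> X"
  unfolding saturated_def by blast

lemma saturated_thmL: "saturated L X \<Longrightarrow> thmL L a \<Longrightarrow> a \<in> X"
  by (meson derives.theorem_rule saturated_derives)

lemma saturated_mp: "saturated L X \<Longrightarrow> Imp a b \<in> X \<Longrightarrow> a \<in> X \<Longrightarrow> b \<in> X"
  by (meson derives.hyp derives.mp saturated_derives)

lemma saturated_thmL_mp: "saturated L X \<Longrightarrow> thmL L (Imp a b) \<Longrightarrow> a \<in> X \<Longrightarrow> b \<in> X"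
  by (meson saturated_mp saturated_thmL)

lemma saturated_thmL_mp2:
  "saturated L X \<Longrightarrow> thmL L (Imp a (Imp b c)) \<Longrightarrow> a \<in> X \<Longrightarrow> b \<in> X \<Longrightarrow> c \<in> X"
  by (meson saturated_mp saturated_thmL)

lemma saturated_thmL_iff: "saturated L X \<Longrightarrow> thmL L (Iff a b) \<Longrightarrow> a \<in> X \<longleftrightarrow> b \<in> X"
  by (meson derives.hyp derives_iff_if_thmL saturated_derives)

lemma saturated_n4_iff: "saturated L X \<Longrightarrow> Iff a b \<in> n4_ax \<Longrightarrow> a \<in> X \<longleftrightarrow> b \<in> X"
  by (simp add: saturated_thmL_iff thmL_n4_ax)

lemma saturated_UNIV: "saturated L UNIV"
  unfolding saturated_def by blast

lemma saturated_Conj_iff: "saturated L X \<Longrightarrow> Conj a b \<in> X \<longleftrightarrow> a \<in> X \<and> b \<in> X"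
  by (meson derives_conjD1 derives_conjD2 derives_conjI derives.hyp saturated_derives)

lemma saturated_Disj_iff: "saturated L X \<Longrightarrow> Disj a b \<in> X \<longleftrightarrow> a \<in> X \<or> b \<in> X"
  by (metis derives_disjI1 derives_disjI2 derives.hyp saturated_derives saturated_def)

lemma saturated_Neg_Neg_iff: "saturated L X \<Longrightarrow> Neg (Neg a) \<in> X \<longleftrightarrow> a \<in> X"
  using saturated_n4_iff[OF _ n4_ax.intros(9)] by blast

lemma saturated_Neg_Conj_iff: "saturated L X \<Longrightarrow> Neg (Conj a b) \<in> X \<longleftrightarrow> Neg a \<in> X \<or> Neg b \<in> X"
  using saturated_n4_iff[OF _ n4_ax.intros(10)] saturated_Disj_iff by blast

lemma saturated_Neg_Disj_iff: "saturated L X \<Longrightarrow> Neg (Disj a b) \<in> X \<longleftrightarrow> Neg a \<in> X \<and> Neg b \<in> X"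
  using saturated_n4_iff[OF _ n4_ax.intros(11)] saturated_Conj_iff by blast

lemma saturated_Neg_Imp_iff: "saturated L X \<Longrightarrow> Neg (Imp a b) \<in> X \<longleftrightarrow> a \<in> X \<and> Neg b \<in> X"
  using saturated_n4_iff[OF _ n4_ax.intros(12)] saturated_Conj_iff by blast

lemma saturated_Imp_iff:
  assumes "saturated L X"
  shows "Imp a b \<in> X \<longleftrightarrow> (\<forall>Y. saturated L Y \<longrightarrow> X \<subseteq> Y \<longrightarrow> a \<in> Y \<longrightarrow> b \<in> Y)"
proof
  show "Imp a b \<in> X \<Longrightarrow> \<forall>Y. saturated L Y \<longrightarrow> X \<subseteq> Y \<longrightarrow> a \<in> Y \<longrightarrow> b \<in> Y"
    using saturated_mp by blast
next
  assume "\<forall>Y. saturated L Y \<longrightarrow> X \<subseteq> Y \<longrightarrow> a \<in> Y \<longrightarrow> b \<in> Y"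
  then have "derives L (insert a X) b"
    by (metis insert_subset lindenbaum)
  then show "Imp a b \<in> X"
    using assms derives_deduction saturated_derives by blast
qed

definition saturated_avoiding :: "variant \<Rightarrow> 'p fm set \<Rightarrow> 'p fm \<Rightarrow> 'p fm set set" where
  "saturated_avoiding L G \<phi> = {D. saturated L D \<and> G \<subseteq> D \<and> \<phi> \<notin> D}"

lemma saturated_avoiding_witness:
  assumes "\<not> derives L (insert b G) \<phi>"
  shows "\<exists>D\<in>saturated_avoiding L G \<phi>. b \<in> D"
proof -
  obtain D where "insert b G \<subseteq> D" "saturated L D" "\<phi> \<notin> D"
    by (rule lindenbaum[OF assms])
  then show ?thesis unfolding saturated_avoiding_def by blast
qed

section \<open>Box and strong-negated diamond contents\<close>

lemma derives_directed_hyps: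
  assumes "derives L (H \<union> G) \<phi>" and "h\<^sub>0 \<in> H"
    and directed: "\<And>h\<^sub>1 h\<^sub>2. h\<^sub>1 \<in> H \<Longrightarrow> h\<^sub>2 \<in> H \<Longrightarrow> \<exists>h\<in>H. derives L {h} h\<^sub>1 \<and> derives L {h} h\<^sub>2"
  shows "\<exists>h\<in>H. derives L (insert h G) \<phi>"
  using assms(1)
proof (induction rule: derives.induct)
  case (theorem_rule a)
  then show ?case using assms(2) derives.theorem_rule by blast
next
  case (hyp a)
  then show ?case using assms(2) by (auto intro: derives.hyp)
next
  case (mp a b)
  then obtain h\<^sub>1 h\<^sub>2 where "h\<^sub>1 \<in> H" "derives L (insert h\<^sub>1 G) (Imp a b)"
    and "h\<^sub>2 \<in> H" "derives L (insert h\<^sub>2 G) a" by blast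
  moreover obtain h where "h \<in> H" "derives L {h} h\<^sub>1" "derives L {h} h\<^sub>2"
    using directed[OF \<open>h\<^sub>1 \<in> H\<close> \<open>h\<^sub>2 \<in> H\<close>] by blast
  moreover have "derives L (insert h G) c"
    if "derives L {h} h'" "derives L (insert h' G) c" for h' c
    using derives_cut[OF derives_mono[OF that(2)] derives_mono[OF that(1)]] by blast
  ultimately show ?case using derives.mp by blast
qed

definition box_set :: "'p fm set \<Rightarrow> 'p fm set" where
  "box_set X = {a. Box a \<in> X}"

definition neg_dia_set :: "'p fm set \<Rightarrow> 'p fm set" where
  "neg_dia_set X = {Neg a | a. Neg (Dia a) \<in> X}"

lemma derives_box_set_hyps:
  assumes X: "saturated L X" and "derives L (box_set X \<union> G) \<phi>"
  obtains b where "Box b \<in> X" "derives L (insert b G) \<phi>"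
proof -
  have "\<exists>h\<in>box_set X. derives L (insert h G) \<phi>"
  proof (rule derives_directed_hyps[OF assms(2)])
    show "Imp a a \<in> box_set X" for a
      using saturated_thmL[OF X thmL_cn4k_ax] by (simp add: box_set_def cn4k_ax.intros)
    fix h\<^sub>1 h\<^sub>2 assume "h\<^sub>1 \<in> box_set X" "h\<^sub>2 \<in> box_set X"
    then have "Conj h\<^sub>1 h\<^sub>2 \<in> box_set X"
      using saturated_thmL_mp[OF X thmL_cn4k_ax[OF cn4k_ax.intros(3)]] saturated_Conj_iff[OF X]
      by (simp add: box_set_def)
    moreover have "derives L {Conj h\<^sub>1 h\<^sub>2} h\<^sub>1" "derives L {Conj h\<^sub>1 h\<^sub>2} h\<^sub>2"
      by (meson derives_conjD1 derives_conjD2 derives.hyp singletonI)+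
    ultimately show "\<exists>h\<in>box_set X. derives L {h} h\<^sub>1 \<and> derives L {h} h\<^sub>2" by blast
  qed
  then show thesis using that unfolding box_set_def by blast
qed

lemma derives_neg_dia_set_hyps:
  assumes X: "saturated L X" and "derives L (neg_dia_set X \<union> G) \<phi>"
  obtains c where "Neg (Dia c) \<in> X" "derives L (insert (Neg c) G) \<phi>"
proof -
  have "\<exists>h\<in>neg_dia_set X. derives L (insert h G) \<phi>"
  proof (rule derives_directed_hyps[OF assms(2)])
    show "Neg (Neg (Imp a a)) \<in> neg_dia_set X" for a
      using saturated_thmL[OF X thmL_cn4k_ax] by (auto simp: neg_dia_set_def cn4k_ax.intros)
    fix h\<^sub>1 h\<^sub>2 assume "h\<^sub>1 \<in> neg_dia_set X" "h\<^sub>2 \<in> neg_dia_set X"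
    then obtain c\<^sub>1 c\<^sub>2 where c: "h\<^sub>1 = Neg c\<^sub>1" "h\<^sub>2 = Neg c\<^sub>2" "Neg (Dia c\<^sub>1) \<in> X" "Neg (Dia c\<^sub>2) \<in> X"
      unfolding neg_dia_set_def by blast
    then have "Neg (Disj c\<^sub>1 c\<^sub>2) \<in> neg_dia_set X"
      using saturated_thmL_mp[OF X thmL_cn4k_ax[OF cn4k_ax.intros(4)]] saturated_Conj_iff[OF X]
      by (auto simp: neg_dia_set_def)
    moreover have "derives L {Neg (Disj c\<^sub>1 c\<^sub>2)} (Conj (Neg c\<^sub>1) (Neg c\<^sub>2))"
      using derives_Neg_Disj_iff derives.hyp by blast
    then have "derives L {Neg (Disj c\<^sub>1 c\<^sub>2)} h\<^sub>1" "derives L {Neg (Disj c\<^sub>1 c\<^sub>2)} h\<^sub>2"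
      using derives_conjD1 derives_conjD2 c by blast+
    ultimately show "\<exists>h\<in>neg_dia_set X. derives L {h} h\<^sub>1 \<and> derives L {h} h\<^sub>2" by blast
  qed
  then show thesis using that unfolding neg_dia_set_def by blast
qed

lemma Box_mem_if_box_set_derives:
  assumes X: "saturated L X" and "derives L (box_set X) a"
  shows "Box a \<in> X"
proof -
  obtain b where "Box b \<in> X" "derives L {b} a"
    using derives_box_set_hyps[OF X] assms(2) by (metis sup_bot.right_neutral)
  then show ?thesis using saturated_thmL_mp[OF X thmL.rbox[OF thmL_imp_if_derives]] by blast
qed

lemma Neg_Dia_mem_if_neg_dia_set_derives:
  assumes X: "saturated L X" and "derives L (neg_dia_set X) (Neg a)"
  shows "Neg (Dia a) \<in> X"
proof -
  obtain c where "Neg (Dia c) \<in> X" "derives L {Neg c} (Neg a)"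
    using derives_neg_dia_set_hyps[OF X] assms(2) by (metis sup_bot.right_neutral)
  then show ?thesis using saturated_thmL_mp[OF X thmL.rndia[OF thmL_imp_if_derives]] by blast
qed

lemma Neg_Box_mem_if_neg_dia_set_derives:
  assumes pm: "L \<in> {VPm, VOne}" and X: "saturated L X"
    and b: "Neg (Box b) \<in> X" and "derives L (insert (Neg b) (neg_dia_set X)) (Neg a)"
  shows "Neg (Box a) \<in> X"
proof -
  obtain c where c: "Neg (Dia c) \<in> X" "derives L (insert (Neg b) {Neg c}) (Neg a)"
    using derives_neg_dia_set_hyps[OF X, of "{Neg b}"] assms(4) by (auto simp: insert_commute)
  then have "derives L {Neg c} (Neg (Neg (Imp (Neg b) (Neg a))))"
    by (simp add: derives_Neg_Neg_iff derives_deduction)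
  then have "Neg (Dia (Neg (Imp (Neg b) (Neg a)))) \<in> X"
    using saturated_thmL_mp[OF X thmL.rndia[OF thmL_imp_if_derives]] c(1) by blast
  moreover have "thmL L (Imp (Neg (Dia (Neg (Imp (Neg b) (Neg a))))) (Imp (Neg (Box b)) (Neg (Box a))))"
    by (rule thmL_pm_ax[OF pm]) (rule pm_ax.intros)
  ultimately show ?thesis using saturated_thmL_mp2[OF X] b by blast
qed

lemma Neg_Box_mem_if_box_set_derives:
  assumes vee: "L \<in> {VVee, VOne}" and X: "saturated L X"
    and b: "Neg (Box b) \<in> X" and "derives L (insert (Neg b) (box_set X)) (Neg a)"
  shows "Neg (Box a) \<in> X"
proof -
  obtain c where c: "Box c \<in> X" "derives L (insert (Neg b) {c}) (Neg a)"
    using derives_box_set_hyps[OF X, of "{Neg b}"] assms(4) by (auto simp: insert_commute)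
  then have "Box (Imp (Neg b) (Neg a)) \<in> X"
    using saturated_thmL_mp[OF X thmL.rbox[OF thmL_imp_if_derives]] derives_deduction by blast
  moreover have "Neg (Box (Neg (Neg b))) \<in> X"
    using saturated_thmL_mp[OF X thmL.rnbox[OF thmL_Neg_imp_Neg_Neg_Neg]] b by blast
  moreover have "thmL L (Imp (Box (Imp (Neg b) (Neg a)))
      (Imp (Neg (Box (Neg (Neg b)))) (Neg (Box (Neg (Neg a))))))"
    by (rule thmL_vee_ax[OF vee]) (rule vee_ax.intros)
  ultimately have "Neg (Box (Neg (Neg a))) \<in> X" using saturated_thmL_mp2[OF X] by blast
  then show ?thesis using saturated_thmL_mp[OF X thmL.rnbox[OF thmL_Neg_Neg_Neg_imp_Neg]] by blast
qed

lemma Dia_mem_if_box_set_derives: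
  assumes pm: "L \<in> {VPm, VOne}" and X: "saturated L X"
    and c: "Dia c \<in> X" and "derives L (insert c (box_set X)) a"
  shows "Dia a \<in> X"
proof -
  obtain b where b: "Box b \<in> X" "derives L (insert c {b}) a"
    using derives_box_set_hyps[OF X, of "{c}"] assms(4) by (auto simp: insert_commute)
  then have "Box (Imp c a) \<in> X"
    using saturated_thmL_mp[OF X thmL.rbox[OF thmL_imp_if_derives]] derives_deduction by blast
  moreover have "thmL L (Imp (Box (Imp c a)) (Imp (Dia c) (Dia a)))"
    by (rule thmL_pm_ax[OF pm]) (rule pm_ax.intros)
  ultimately show ?thesis using saturated_thmL_mp2[OF X] c by blast
qed

lemma Dia_mem_if_neg_dia_set_derives:
  assumes vee: "L \<in> {VVee, VOne}" and X: "saturated L X"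
    and c: "Dia c \<in> X" and "derives L (insert c (neg_dia_set X)) a"
  shows "Dia a \<in> X"
proof -
  obtain e where e: "Neg (Dia e) \<in> X" "derives L (insert c {Neg e}) a"
    using derives_neg_dia_set_hyps[OF X, of "{c}"] assms(4) by (auto simp: insert_commute)
  then have "derives L {Neg e} (Neg (Neg (Imp c a)))"
    by (simp add: derives_Neg_Neg_iff derives_deduction)
  then have "Neg (Dia (Neg (Imp c a))) \<in> X"
    using saturated_thmL_mp[OF X thmL.rndia[OF thmL_imp_if_derives]] e(1) by blast
  moreover have "thmL L (Imp (Neg (Dia (Neg (Imp c a)))) (Imp (Dia c) (Dia a)))"
    by (rule thmL_vee_ax[OF vee]) (rule vee_ax.intros)
  ultimately show ?thesis using saturated_thmL_mp2[OF X] c by blast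
qed

lemma join_box_set_subset_iff:
  assumes join: "L \<in> {VJoin, VOne}" and X: "saturated L X" and D: "saturated L D"
  shows "box_set X \<subseteq> D \<longleftrightarrow> neg_dia_set X \<subseteq> D"
proof
  assume box: "box_set X \<subseteq> D"
  show "neg_dia_set X \<subseteq> D"
  proof
    fix h assume "h \<in> neg_dia_set X"
    then obtain c where c: "h = Neg c" "Neg (Dia c) \<in> X" unfolding neg_dia_set_def by blast
    then have "Neg (Dia (Neg (Neg c))) \<in> X"
      using saturated_thmL_mp[OF X thmL.rndia[OF thmL_Neg_imp_Neg_Neg_Neg]] by blast
    then have "Box (Neg c) \<in> X"
      using saturated_thmL_iff[OF X thmL_join_ax[OF join join_ax.intros(1)]] by blast
    then show "h \<in> D" using box c(1) unfolding box_set_def by blast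
  qed
next
  assume neg_dia: "neg_dia_set X \<subseteq> D"
  show "box_set X \<subseteq> D"
  proof
    fix b assume "b \<in> box_set X"
    then have "Neg (Dia (Neg b)) \<in> X"
      using saturated_thmL_iff[OF X thmL_join_ax[OF join join_ax.intros(1)]]
      unfolding box_set_def by blast
    then have "Neg (Neg b) \<in> D" using neg_dia unfolding neg_dia_set_def by blast
    then show "b \<in> D" using saturated_Neg_Neg_iff[OF D] by blast
  qed
qed

lemma join_witnesses_iff:
  assumes join: "L \<in> {VJoin, VOne}" and X: "saturated L X" and F: "\<forall>D\<in>F. saturated L D"
  shows "(\<forall>b. Neg (Box b) \<in> X \<longrightarrow> (\<exists>D\<in>F. Neg b \<in> D))
    \<longleftrightarrow> (\<forall>c. Dia c \<in> X \<longrightarrow> (\<exists>D\<in>F. c \<in> D))"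
proof -
  have Dia_iff: "Dia c \<in> X \<longleftrightarrow> Neg (Box (Neg c)) \<in> X" for c
    using saturated_thmL_iff[OF X thmL_join_ax[OF join join_ax.intros(2)]] .
  have "Neg (Box b) \<in> X \<longleftrightarrow> Neg (Box (Neg (Neg b))) \<in> X" for b
    using saturated_thmL_mp[OF X thmL.rnbox] thmL_Neg_imp_Neg_Neg_Neg thmL_Neg_Neg_Neg_imp_Neg
    by blast
  then show ?thesis
    using Dia_iff saturated_Neg_Neg_iff F by metis
qed

section \<open>Segments\<close>

lemma star_segmentI:
  assumes "saturated L X" and "\<forall>D \<in> Bp \<union> Bm \<union> Dp \<union> Dm. saturated L D"
    and "\<forall>D\<in>Bp. box_set X \<subseteq> D" and "\<forall>D\<in>Dm. neg_dia_set X \<subseteq> D"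
    and "\<forall>b. Neg (Box b) \<in> X \<longrightarrow> (\<exists>D\<in>Bm. Neg b \<in> D)"
    and "\<forall>c. Dia c \<in> X \<longrightarrow> (\<exists>D\<in>Dp. c \<in> D)"
    and "shape L \<lparr>head = X, PhiBp = Bp, PhiBm = Bm, PhiDp = Dp, PhiDm = Dm\<rparr>"
  shows "star_segment L \<lparr>head = X, PhiBp = Bp, PhiBm = Bm, PhiDp = Dp, PhiDm = Dm\<rparr>"
  using assms unfolding star_segment_def segment_def box_set_def neg_dia_set_def by fastforce

lemma star_segment_saturated:
  assumes "star_segment L s"
  shows "saturated L (head s)"
    and "D \<in> PhiBp s \<union> PhiBm s \<union> PhiDp s \<union> PhiDm s \<Longrightarrow> saturated L D"
  using assms unfolding star_segment_def segment_def by auto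

lemma star_segmentD:
  assumes "star_segment L s"
  shows "Box a \<in> head s \<Longrightarrow> D \<in> PhiBp s \<Longrightarrow> a \<in> D"
    and "Neg (Box a) \<in> head s \<Longrightarrow> \<exists>D\<in>PhiBm s. Neg a \<in> D"
    and "Dia a \<in> head s \<Longrightarrow> \<exists>D\<in>PhiDp s. a \<in> D"
    and "Neg (Dia a) \<in> head s \<Longrightarrow> D \<in> PhiDm s \<Longrightarrow> Neg a \<in> D"
  using assms unfolding star_segment_def segment_def by blast+

lemma saturated_iff_head: "saturated L X \<longleftrightarrow> (\<exists>s. star_segment L s \<and> head s = X)"
proof
  let ?U = "{UNIV}"
  assume "saturated L X"
  moreover have "shape L \<lparr>head = X, PhiBp = ?U, PhiBm = ?U, PhiDp = ?U, PhiDm = ?U\<rparr>"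
    by (cases L) simp_all
  ultimately have "star_segment L \<lparr>head = X, PhiBp = ?U, PhiBm = ?U, PhiDp = ?U, PhiDm = ?U\<rparr>"
    by (intro star_segmentI) (simp_all add: saturated_UNIV)
  then show "\<exists>s. star_segment L s \<and> head s = X" by force
qed (auto intro: star_segment_saturated)

lemma pm_star_segment:
  assumes "L = VPm" and "saturated L X" and "\<forall>D \<in> F \<union> G. saturated L D"
    and "\<forall>D\<in>F. box_set X \<subseteq> D" and "\<forall>D\<in>G. neg_dia_set X \<subseteq> D"
    and "\<forall>c. Dia c \<in> X \<longrightarrow> (\<exists>D\<in>F. c \<in> D)"
    and "\<forall>b. Neg (Box b) \<in> X \<longrightarrow> (\<exists>D\<in>G. Neg b \<in> D)"
  shows "star_segment L \<lparr>head = X, PhiBp = F, PhiBm = G, PhiDp = F, PhiDm = G\<rparr>"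
  using assms by (intro star_segmentI) auto

lemma vee_star_segment:
  assumes "L = VVee" and "saturated L X" and "\<forall>D \<in> F \<union> G. saturated L D"
    and "\<forall>D\<in>F. box_set X \<subseteq> D" and "\<forall>D\<in>G. neg_dia_set X \<subseteq> D"
    and "\<forall>b. Neg (Box b) \<in> X \<longrightarrow> (\<exists>D\<in>F. Neg b \<in> D)"
    and "\<forall>c. Dia c \<in> X \<longrightarrow> (\<exists>D\<in>G. c \<in> D)"
  shows "star_segment L \<lparr>head = X, PhiBp = F, PhiBm = F, PhiDp = G, PhiDm = G\<rparr>"
  using assms by (intro star_segmentI) auto

lemma join_star_segment:
  assumes join: "L \<in> {VJoin, VOne}" and X: "saturated L X" and sat: "\<forall>D \<in> F \<union> G. saturated L D"
    and "\<forall>D\<in>F. box_set X \<subseteq> D"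
    and "\<forall>b. Neg (Box b) \<in> X \<longrightarrow> (\<exists>D\<in>G. Neg b \<in> D)"
    and "L = VOne \<Longrightarrow> F = G"
  shows "star_segment L \<lparr>head = X, PhiBp = F, PhiBm = G, PhiDp = G, PhiDm = F\<rparr>"
proof (rule star_segmentI[OF X])
  show "\<forall>D\<in>F. neg_dia_set X \<subseteq> D"
    using join_box_set_subset_iff[OF join X] sat assms(4) by blast
  show "\<forall>c. Dia c \<in> X \<longrightarrow> (\<exists>D\<in>G. c \<in> D)"
    using join_witnesses_iff[OF join X] sat assms(5) by blast
  show "shape L \<lparr>head = X, PhiBp = F, PhiBm = G, PhiDp = G, PhiDm = F\<rparr>"
    using join assms(6) by auto
qed (use assms in auto)

lemma box_refuting_segment:
  assumes X: "saturated L X" and "Box a \<notin> X"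
  obtains s D where "star_segment L s" "head s = X" "D \<in> PhiBp s" "a \<notin> D"
proof -
  obtain D where D: "box_set X \<subseteq> D" "saturated L D" "a \<notin> D"
    using lindenbaum Box_mem_if_box_set_derives[OF X] assms(2) by metis
  let ?F = "{D, UNIV}" and ?U = "{UNIV}"
  consider "L = VPm" | "L = VVee" | "L \<in> {VJoin, VOne}" by (cases L) auto
  then show thesis
  proof cases
    case 1
    then have "star_segment L \<lparr>head = X, PhiBp = ?F, PhiBm = ?U, PhiDp = ?F, PhiDm = ?U\<rparr>"
      using D by (intro pm_star_segment X) (auto simp: saturated_UNIV)
    then show thesis by (rule that[of _ D]) (simp_all add: D)
  next
    case 2
    then have "star_segment L \<lparr>head = X, PhiBp = ?F, PhiBm = ?F, PhiDp = ?U, PhiDm = ?U\<rparr>"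
      using D by (intro vee_star_segment X) (auto simp: saturated_UNIV)
    then show thesis by (rule that[of _ D]) (simp_all add: D)
  next
    case 3
    then have "star_segment L \<lparr>head = X, PhiBp = ?F, PhiBm = ?F, PhiDp = ?F, PhiDm = ?F\<rparr>"
      using D by (intro join_star_segment X) (auto simp: saturated_UNIV)
    then show thesis by (rule that[of _ D]) (simp_all add: D)
  qed
qed

lemma neg_dia_refuting_segment:
  assumes X: "saturated L X" and "Neg (Dia a) \<notin> X"
  obtains s D where "star_segment L s" "head s = X" "D \<in> PhiDm s" "Neg a \<notin> D"
proof -
  obtain D where D: "neg_dia_set X \<subseteq> D" "saturated L D" "Neg a \<notin> D"
    using lindenbaum Neg_Dia_mem_if_neg_dia_set_derives[OF X] assms(2) by metis
  let ?F = "{D, UNIV}" and ?U = "{UNIV}"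
  consider "L = VPm" | "L = VVee" | "L \<in> {VJoin, VOne}" by (cases L) auto
  then show thesis
  proof cases
    case 1
    then have "star_segment L \<lparr>head = X, PhiBp = ?U, PhiBm = ?F, PhiDp = ?U, PhiDm = ?F\<rparr>"
      using D by (intro pm_star_segment X) (auto simp: saturated_UNIV)
    then show thesis by (rule that[of _ D]) (simp_all add: D)
  next
    case 2
    then have "star_segment L \<lparr>head = X, PhiBp = ?U, PhiBm = ?U, PhiDp = ?F, PhiDm = ?F\<rparr>"
      using D by (intro vee_star_segment X) (auto simp: saturated_UNIV)
    then show thesis by (rule that[of _ D]) (simp_all add: D)
  next
    case 3
    then have "box_set X \<subseteq> D" using join_box_set_subset_iff X D by blast
    with 3 have "star_segment L \<lparr>head = X, PhiBp = ?F, PhiBm = ?F, PhiDp = ?F, PhiDm = ?F\<rparr>"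
      using D by (intro join_star_segment X) (auto simp: saturated_UNIV)
    then show thesis by (rule that[of _ D]) (simp_all add: D)
  qed
qed

lemma neg_box_refuting_segment:
  assumes X: "saturated L X" and a: "Neg (Box a) \<notin> X"
  obtains s where "star_segment L s" "head s = X" "\<forall>D\<in>PhiBm s. Neg a \<notin> D"
proof -
  let ?U = "{UNIV}"
  show thesis
  proof (cases L)
    case VPm
    let ?F = "saturated_avoiding L (neg_dia_set X) (Neg a)"
    have "\<exists>D\<in>?F. Neg b \<in> D" if "Neg (Box b) \<in> X" for b
      using Neg_Box_mem_if_neg_dia_set_derives[OF _ X that] VPm a by (intro saturated_avoiding_witness) auto
    with VPm have "star_segment L \<lparr>head = X, PhiBp = ?U, PhiBm = ?F, PhiDp = ?U, PhiDm = ?F\<rparr>"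
      by (intro pm_star_segment X) (auto simp: saturated_avoiding_def saturated_UNIV)
    then show thesis by (rule that) (simp_all add: saturated_avoiding_def)
  next
    case VVee
    let ?F = "saturated_avoiding L (box_set X) (Neg a)"
    have "\<exists>D\<in>?F. Neg b \<in> D" if "Neg (Box b) \<in> X" for b
      using Neg_Box_mem_if_box_set_derives[OF _ X that] VVee a by (intro saturated_avoiding_witness) auto
    with VVee have "star_segment L \<lparr>head = X, PhiBp = ?F, PhiBm = ?F, PhiDp = ?U, PhiDm = ?U\<rparr>"
      by (intro vee_star_segment X) (auto simp: saturated_avoiding_def saturated_UNIV)
    then show thesis by (rule that) (simp_all add: saturated_avoiding_def)
  next
    case VJoin
    let ?F = "saturated_avoiding L {} (Neg a)"
    have "\<exists>D\<in>?F. Neg b \<in> D" if "Neg (Box b) \<in> X" for b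
      using saturated_thmL_mp[OF X thmL.rnbox[OF thmL_imp_if_derives] that] a
      by (intro saturated_avoiding_witness) auto
    with VJoin have "star_segment L \<lparr>head = X, PhiBp = ?U, PhiBm = ?F, PhiDp = ?F, PhiDm = ?U\<rparr>"
      by (intro join_star_segment X) (auto simp: saturated_avoiding_def saturated_UNIV)
    then show thesis by (rule that) (simp_all add: saturated_avoiding_def)
  next
    case VOne
    let ?F = "saturated_avoiding L (box_set X) (Neg a)"
    have "\<exists>D\<in>?F. Neg b \<in> D" if "Neg (Box b) \<in> X" for b
      using Neg_Box_mem_if_box_set_derives[OF _ X that] VOne a by (intro saturated_avoiding_witness) auto
    with VOne have "star_segment L \<lparr>head = X, PhiBp = ?F, PhiBm = ?F, PhiDp = ?F, PhiDm = ?F\<rparr>"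
      by (intro join_star_segment X) (auto simp: saturated_avoiding_def saturated_UNIV)
    then show thesis by (rule that) (simp_all add: saturated_avoiding_def)
  qed
qed

lemma dia_refuting_segment:
  assumes X: "saturated L X" and a: "Dia a \<notin> X"
  obtains s where "star_segment L s" "head s = X" "\<forall>D\<in>PhiDp s. a \<notin> D"
proof -
  let ?U = "{UNIV}"
  show thesis
  proof (cases L)
    case VPm
    let ?F = "saturated_avoiding L (box_set X) a"
    have "\<exists>D\<in>?F. c \<in> D" if "Dia c \<in> X" for c
      using Dia_mem_if_box_set_derives[OF _ X that] VPm a by (intro saturated_avoiding_witness) auto
    with VPm have "star_segment L \<lparr>head = X, PhiBp = ?F, PhiBm = ?U, PhiDp = ?F, PhiDm = ?U\<rparr>"
      by (intro pm_star_segment X) (auto simp: saturated_avoiding_def saturated_UNIV)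
    then show thesis by (rule that) (simp_all add: saturated_avoiding_def)
  next
    case VVee
    let ?F = "saturated_avoiding L (neg_dia_set X) a"
    have "\<exists>D\<in>?F. c \<in> D" if "Dia c \<in> X" for c
      using Dia_mem_if_neg_dia_set_derives[OF _ X that] VVee a by (intro saturated_avoiding_witness) auto
    with VVee have "star_segment L \<lparr>head = X, PhiBp = ?U, PhiBm = ?U, PhiDp = ?F, PhiDm = ?F\<rparr>"
      by (intro vee_star_segment X) (auto simp: saturated_avoiding_def saturated_UNIV)
    then show thesis by (rule that) (simp_all add: saturated_avoiding_def)
  next
    case VJoin
    let ?F = "saturated_avoiding L {} a"
    have "\<exists>D\<in>?F. c \<in> D" if "Dia c \<in> X" for c
      using saturated_thmL_mp[OF X thmL.rdia[OF thmL_imp_if_derives] that] a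
      by (intro saturated_avoiding_witness) auto
    moreover have "\<forall>D\<in>?F. saturated L D" by (simp add: saturated_avoiding_def)
    ultimately have "\<exists>D\<in>?F. Neg b \<in> D" if "Neg (Box b) \<in> X" for b
      using join_witnesses_iff[OF _ X] VJoin that by blast
    with VJoin have "star_segment L \<lparr>head = X, PhiBp = ?U, PhiBm = ?F, PhiDp = ?F, PhiDm = ?U\<rparr>"
      by (intro join_star_segment X) (auto simp: saturated_avoiding_def saturated_UNIV)
    then show thesis by (rule that) (simp_all add: saturated_avoiding_def)
  next
    case VOne
    let ?F = "saturated_avoiding L (box_set X) a"
    have "\<exists>D\<in>?F. c \<in> D" if "Dia c \<in> X" for c
      using Dia_mem_if_box_set_derives[OF _ X that] VOne a by (intro saturated_avoiding_witness) auto
    moreover have "\<forall>D\<in>?F. saturated L D" by (simp add: saturated_avoiding_def)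
    ultimately have "\<exists>D\<in>?F. Neg b \<in> D" if "Neg (Box b) \<in> X" for b
      using join_witnesses_iff[OF _ X] VOne that by blast
    with VOne have "star_segment L \<lparr>head = X, PhiBp = ?F, PhiBm = ?F, PhiDp = ?F, PhiDm = ?F\<rparr>"
      by (intro join_star_segment X) (auto simp: saturated_avoiding_def saturated_UNIV)
    then show thesis by (rule that) (simp_all add: saturated_avoiding_def)
  qed
qed

section \<open>The canonical model\<close>

lemma canon_head_saturated: "s \<in> W (canon L) \<Longrightarrow> saturated L (head s)"
  using star_segment_saturated(1) by (simp add: canon_def)

lemma family_member_is_head:
  assumes "star_segment L s" and "D \<in> PhiBp s \<union> PhiBm s \<union> PhiDp s \<union> PhiDm s"
  obtains t where "star_segment L t" "head t = D"
  using star_segment_saturated(2)[OF assms] saturated_iff_head by blast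

lemma canon_Imp_iff:
  assumes "s \<in> W (canon L)"
  shows "Imp a c \<in> head s \<longleftrightarrow>
    (\<forall>s'\<in>W (canon L). le (canon L) s s' \<longrightarrow> a \<in> head s' \<longrightarrow> c \<in> head s')"
proof -
  have "saturated L (head s)" using assms by (rule canon_head_saturated)
  then have "Imp a c \<in> head s \<longleftrightarrow> (\<forall>Y. saturated L Y \<longrightarrow> head s \<subseteq> Y \<longrightarrow> a \<in> Y \<longrightarrow> c \<in> Y)"
    by (rule saturated_Imp_iff)
  also have "\<dots> \<longleftrightarrow> (\<forall>s'. star_segment L s' \<longrightarrow> head s \<subseteq> head s' \<longrightarrow> a \<in> head s' \<longrightarrow> c \<in> head s')"
    unfolding saturated_iff_head by auto
  finally show ?thesis by (simp add: canon_def)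
qed

lemma canon_Box_iff:
  assumes "s \<in> W (canon L)"
  shows "Box a \<in> head s \<longleftrightarrow> (\<forall>s'\<in>W (canon L). le (canon L) s s' \<longrightarrow>
    (\<forall>t\<in>W (canon L). RBp (canon L) s' t \<longrightarrow> a \<in> head t))"
proof -
  have s: "star_segment L s" using assms by (simp add: canon_def)
  have "Box a \<in> head s \<longleftrightarrow> (\<forall>s'. star_segment L s' \<longrightarrow> head s \<subseteq> head s' \<longrightarrow>
    (\<forall>t. star_segment L t \<longrightarrow> head t \<in> PhiBp s' \<longrightarrow> a \<in> head t))" (is "_ \<longleftrightarrow> ?rhs")
  proof
    show "Box a \<in> head s \<Longrightarrow> ?rhs" using star_segmentD(1) by blast
  next
    assume ?rhs
    show "Box a \<in> head s"
    proof (rule ccontr)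
      assume "Box a \<notin> head s"
      then obtain s' D where s': "star_segment L s'" "head s' = head s" "D \<in> PhiBp s'" "a \<notin> D"
        by (rule box_refuting_segment[OF star_segment_saturated(1)[OF s]])
      moreover obtain t where "star_segment L t" "head t = D"
        using family_member_is_head s'(1,3) by blast
      ultimately show False using \<open>?rhs\<close> by blast
    qed
  qed
  then show ?thesis by (simp add: canon_def)
qed

lemma canon_Neg_Box_iff:
  assumes "s \<in> W (canon L)"
  shows "Neg (Box a) \<in> head s \<longleftrightarrow> (\<forall>s'\<in>W (canon L). le (canon L) s s' \<longrightarrow>
    (\<exists>t\<in>W (canon L). RBm (canon L) s' t \<and> Neg a \<in> head t))"
proof -
  have s: "star_segment L s" using assms by (simp add: canon_def)
  have "Neg (Box a) \<in> head s \<longleftrightarrow> (\<forall>s'. star_segment L s' \<longrightarrow> head s \<subseteq> head s' \<longrightarrow>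
    (\<exists>t. star_segment L t \<and> head t \<in> PhiBm s' \<and> Neg a \<in> head t))" (is "_ \<longleftrightarrow> ?rhs")
  proof
    assume "Neg (Box a) \<in> head s"
    show ?rhs
    proof (intro allI impI)
      fix s' assume "star_segment L s'" "head s \<subseteq> head s'"
      then obtain D where "D \<in> PhiBm s'" "Neg a \<in> D"
        using star_segmentD(2) \<open>Neg (Box a) \<in> head s\<close> by blast
      moreover obtain t where "star_segment L t" "head t = D"
        using family_member_is_head \<open>star_segment L s'\<close> calculation(1) by blast
      ultimately show "\<exists>t. star_segment L t \<and> head t \<in> PhiBm s' \<and> Neg a \<in> head t" by blast
    qed
  next
    assume ?rhs
    show "Neg (Box a) \<in> head s"
    proof (rule ccontr)
      assume "Neg (Box a) \<notin> head s"
      then obtain s' where "star_segment L s'" "head s' = head s" "\<forall>D\<in>PhiBm s'. Neg a \<notin> D"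
        by (rule neg_box_refuting_segment[OF star_segment_saturated(1)[OF s]])
      then show False using \<open>?rhs\<close> by blast
    qed
  qed
  then show ?thesis by (simp add: canon_def)
qed

lemma canon_Dia_iff:
  assumes "s \<in> W (canon L)"
  shows "Dia a \<in> head s \<longleftrightarrow> (\<forall>s'\<in>W (canon L). le (canon L) s s' \<longrightarrow>
    (\<exists>t\<in>W (canon L). RDp (canon L) s' t \<and> a \<in> head t))"
proof -
  have s: "star_segment L s" using assms by (simp add: canon_def)
  have "Dia a \<in> head s \<longleftrightarrow> (\<forall>s'. star_segment L s' \<longrightarrow> head s \<subseteq> head s' \<longrightarrow>
    (\<exists>t. star_segment L t \<and> head t \<in> PhiDp s' \<and> a \<in> head t))" (is "_ \<longleftrightarrow> ?rhs")
  proof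
    assume "Dia a \<in> head s"
    show ?rhs
    proof (intro allI impI)
      fix s' assume "star_segment L s'" "head s \<subseteq> head s'"
      then obtain D where "D \<in> PhiDp s'" "a \<in> D"
        using star_segmentD(3) \<open>Dia a \<in> head s\<close> by blast
      moreover obtain t where "star_segment L t" "head t = D"
        using family_member_is_head \<open>star_segment L s'\<close> calculation(1) by blast
      ultimately show "\<exists>t. star_segment L t \<and> head t \<in> PhiDp s' \<and> a \<in> head t" by blast
    qed
  next
    assume ?rhs
    show "Dia a \<in> head s"
    proof (rule ccontr)
      assume "Dia a \<notin> head s"
      then obtain s' where "star_segment L s'" "head s' = head s" "\<forall>D\<in>PhiDp s'. a \<notin> D"
        by (rule dia_refuting_segment[OF star_segment_saturated(1)[OF s]])
      then show False using \<open>?rhs\<close> by blast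
    qed
  qed
  then show ?thesis by (simp add: canon_def)
qed

lemma canon_Neg_Dia_iff:
  assumes "s \<in> W (canon L)"
  shows "Neg (Dia a) \<in> head s \<longleftrightarrow> (\<forall>s'\<in>W (canon L). le (canon L) s s' \<longrightarrow>
    (\<forall>t\<in>W (canon L). RDm (canon L) s' t \<longrightarrow> Neg a \<in> head t))"
proof -
  have s: "star_segment L s" using assms by (simp add: canon_def)
  have "Neg (Dia a) \<in> head s \<longleftrightarrow> (\<forall>s'. star_segment L s' \<longrightarrow> head s \<subseteq> head s' \<longrightarrow>
    (\<forall>t. star_segment L t \<longrightarrow> head t \<in> PhiDm s' \<longrightarrow> Neg a \<in> head t))" (is "_ \<longleftrightarrow> ?rhs")
  proof
    show "Neg (Dia a) \<in> head s \<Longrightarrow> ?rhs" using star_segmentD(4) by blast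
  next
    assume ?rhs
    show "Neg (Dia a) \<in> head s"
    proof (rule ccontr)
      assume "Neg (Dia a) \<notin> head s"
      then obtain s' D where s': "star_segment L s'" "head s' = head s" "D \<in> PhiDm s'" "Neg a \<notin> D"
        by (rule neg_dia_refuting_segment[OF star_segment_saturated(1)[OF s]])
      moreover obtain t where "star_segment L t" "head t = D"
        using family_member_is_head s'(1,3) by blast
      ultimately show False using \<open>?rhs\<close> by blast
    qed
  qed
  then show ?thesis by (simp add: canon_def)
qed

theorem lemma3:
  fixes L :: variant and a :: "'p::countable fm" and s :: "'p seg"
  assumes "s \<in> W (canon L)"
  shows "(forces (canon L) True s a \<longleftrightarrow> a \<in> head s)
       \<and> (forces (canon L) False s a \<longleftrightarrow> Neg a \<in> head s)"
  using assms
proof (induction a arbitrary: s)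
  case (Var p)
  then show ?case by (simp add: canon_def)
next
  case (Neg a)
  have X: "saturated L (head s)" using Neg.prems by (rule canon_head_saturated)
  show ?case using Neg saturated_Neg_Neg_iff[OF X] by simp
next
  case (Conj a c)
  have X: "saturated L (head s)" using Conj.prems by (rule canon_head_saturated)
  show ?case using Conj saturated_Conj_iff[OF X] saturated_Neg_Conj_iff[OF X] by simp
next
  case (Disj a c)
  have X: "saturated L (head s)" using Disj.prems by (rule canon_head_saturated)
  show ?case using Disj saturated_Disj_iff[OF X] saturated_Neg_Disj_iff[OF X] by simp
next
  case (Imp a c)
  have X: "saturated L (head s)" using Imp.prems by (rule canon_head_saturated)
  show ?case using Imp saturated_Neg_Imp_iff[OF X] by (simp add: canon_Imp_iff)
next
  case (Box a)
  then show ?case by (simp add: canon_Box_iff canon_Neg_Box_iff)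
next
  case (Dia a)
  then show ?case by (simp add: canon_Dia_iff canon_Neg_Dia_iff)
qed

end
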